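(* Let $V$ be a finite-dimensional vector space over a field and let $G$ be a (not necessarily amenable) group. Then a symmetric linear cellular automaton $\tau:V^G\to V^G$ is surjective if and only if it is pre-injective.
   Context: A linear cellular automaton over $G$ with alphabet $V$ is a linear map $\tau:V^G\to V^G$ for which there are a finite set $M\subset G$ and linear maps $A_m:V\to V$ ($m\in M$) with $\tau(f)(g)=\sum_{m\in M}A_mf(gm)$ for all $f\in V^G$, $g\in G$. Writing $V=\mathbb{K}^r$, the transpose $\tau'$ of $\tau$ is the linear map whose matrix with respect to the basis $\{\delta_g^i\}$ of finitely supported functions ($\delta_g^i(g)=e_i$, $\delta_g^i(h)=0$ for $h\neq g$) is the transpose of the matrix of $\tau$; explicitly $\tau'(f)(g)=\sum_{m\in M}A_m^{T}f(gm^{-1})$. $\tau$ is symmetric if $\tau'=\tau$. A linear map on $V^G$ is pre-injective if its restriction to the finitely supported functions is injective. *)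

theory Defs
  imports "HOL-Analysis.Analysis"
begin

text \<open>The group G is a type of class group_add (written additively: gm is g + m,
  m inverse is - m). The alphabet is V = K^n, i.e. 'k ^ 'n with 'k a field and 'n a
  finite index type; linear maps V to V are n x n matrices.\<close>

definition lca :: "'g::group_add set \<Rightarrow> ('g \<Rightarrow> 'k::field^'n^'n)
    \<Rightarrow> ('g \<Rightarrow> 'k^'n) \<Rightarrow> ('g \<Rightarrow> 'k^'n)" where
  "lca M A f g = (\<Sum>m\<in>M. A m *v f (g + m))"

definition lca_transpose :: "'g::group_add set \<Rightarrow> ('g \<Rightarrow> 'k::field^'n^'n)
    \<Rightarrow> ('g \<Rightarrow> 'k^'n) \<Rightarrow> ('g \<Rightarrow> 'k^'n)" where
  "lca_transpose M A f g = (\<Sum>m\<in>M. transpose (A m) *v f (g + - m))"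

definition finitely_supported :: "('g \<Rightarrow> 'v::zero) set" where
  "finitely_supported = {f. finite {g. f g \<noteq> 0}}"

definition pre_injective :: "(('g \<Rightarrow> 'v::zero) \<Rightarrow> ('g \<Rightarrow> 'w)) \<Rightarrow> bool" where
  "pre_injective \<tau> \<longleftrightarrow> inj_on \<tau> finitely_supported"

end

theory Submission
  imports Defs "HOL-Library.Function_Algebras"
begin

text \<open>Finitely supported configurations pair with arbitrary configurations via
  \<open>\<langle>\<psi>, f\<rangle> = \<Sum>\<^sub>g \<psi>(g) \<cdot> f(g)\<close>, and under this pairing the transpose \<open>\<tau>'\<close> is the adjoint of
  \<open>\<tau>\<close>. If \<open>\<tau>\<close> is surjective, every coordinate \<open>\<psi>(g)\<^sub>i = \<langle>\<psi>, \<delta>\<^sub>g\<^sup>i\<rangle>\<close> of a finitely supported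
  \<open>\<psi>\<close> with \<open>\<tau>'\<psi> = 0\<close> equals \<open>\<langle>\<tau>'\<psi>, f\<rangle> = 0\<close> for a preimage \<open>f\<close> of \<open>\<delta>\<^sub>g\<^sup>i\<close>, so \<open>\<tau>'\<close> is
  pre-injective. If \<open>\<tau>\<close> is pre-injective, it has a linear left inverse \<open>L\<close> on the finitely
  supported configurations, and a preimage of \<open>h\<close> under \<open>\<tau>'\<close> is read off from the
  functional \<open>v \<mapsto> \<langle>L v, h\<rangle>\<close> on the basis vectors \<open>\<delta>\<^sub>g\<^sup>i\<close>, since \<open>\<tau> \<delta>\<^sub>g\<^sup>i\<close> is expressed through the
  same matrix entries as \<open>\<tau>'\<close>. For symmetric \<open>\<tau>\<close> both
  implications concern \<open>\<tau>\<close> alone.\<close>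

text \<open>Configurations over a general field have no scalar multiplication from the type classes,
  so the vector space structure used for linear algebra is given explicitly.\<close>
definition fun_scale :: "'k::field \<Rightarrow> ('g \<Rightarrow> 'k^'n) \<Rightarrow> ('g \<Rightarrow> 'k^'n)" where
  "fun_scale c f = (\<lambda>g. c *s f g)"

lemma vector_space_fun_scale: "vector_space (fun_scale :: 'k::field \<Rightarrow> ('g \<Rightarrow> 'k^'n) \<Rightarrow> _)"
  unfolding vector_space_def fun_scale_def
  by (auto simp: fun_eq_iff vector_add_ldistrib vector_sadd_rdistrib vector_smult_assoc)

lemma vector_space_pair_fun_scale:
  "vector_space_pair (fun_scale :: 'k::field \<Rightarrow> ('g \<Rightarrow> 'k^'n) \<Rightarrow> _) fun_scale"
  by (simp add: vector_space_pair_def vector_space_fun_scale)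

definition delta :: "'g \<Rightarrow> 'n \<Rightarrow> ('g \<Rightarrow> 'k::field^'n)" where
  "delta g i = (\<lambda>h. if h = g then axis i 1 else 0)"

lemma finitely_supported_add:
  "(f1 :: 'g \<Rightarrow> 'k::field^'n) \<in> finitely_supported \<Longrightarrow> f2 \<in> finitely_supported
    \<Longrightarrow> f1 + f2 \<in> finitely_supported"
  unfolding finitely_supported_def
  by (auto intro: finite_subset[of _ "{g. f1 g \<noteq> 0} \<union> {g. f2 g \<noteq> 0}"])

lemma finitely_supported_scale: "f \<in> finitely_supported \<Longrightarrow> fun_scale c f \<in> finitely_supported"
  unfolding finitely_supported_def fun_scale_def
  by (auto intro: finite_subset[of _ "{g. f g \<noteq> 0}"])

lemma finitely_supported_sum:
  "(\<And>x. x \<in> X \<Longrightarrow> (F x :: 'g \<Rightarrow> 'k::field^'n) \<in> finitely_supported)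
    \<Longrightarrow> sum F X \<in> finitely_supported"
  by (induction X rule: infinite_finite_induct)
    (auto simp: finitely_supported_add, simp_all add: finitely_supported_def)

lemma finitely_supported_delta: "delta g i \<in> finitely_supported"
  unfolding finitely_supported_def delta_def
  by (auto intro: finite_subset[of _ "{g}"])

lemma subspace_finitely_supported:
  "module.subspace (fun_scale :: 'k::field \<Rightarrow> ('g \<Rightarrow> 'k^'n) \<Rightarrow> _) finitely_supported"
proof -
  interpret vector_space "fun_scale :: 'k \<Rightarrow> ('g \<Rightarrow> 'k^'n) \<Rightarrow> _"
    by (rule vector_space_fun_scale)
  show ?thesis
    unfolding subspace_def
    by (auto simp: finitely_supported_add finitely_supported_scale)
      (simp add: finitely_supported_def)
qed

definition dot :: "'k::field^'n \<Rightarrow> 'k^'n \<Rightarrow> 'k" where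
  "dot x y = (\<Sum>i\<in>UNIV. x $ i * y $ i)"

lemma dot_0_left [simp]: "dot 0 y = 0"
  by (simp add: dot_def)

lemma dot_0_right [simp]: "dot x 0 = 0"
  by (simp add: dot_def)

lemma dot_add_left: "dot (x + y) z = dot x z + dot y z"
  by (simp add: dot_def distrib_right sum.distrib)

lemma dot_scale_left: "dot (c *s x) z = c * dot x z"
  by (simp add: dot_def sum_distrib_left mult.assoc)

lemma dot_sum_left: "dot (sum F X) y = (\<Sum>x\<in>X. dot (F x) y)"
  unfolding dot_def by (simp add: sum_component sum_distrib_right) (rule sum.swap)

lemma dot_sum_right: "dot y (sum F X) = (\<Sum>x\<in>X. dot y (F x))"
  unfolding dot_def by (simp add: sum_component sum_distrib_left) (rule sum.swap)

lemma dot_axis_left: "dot (axis i 1) y = y $ i"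
proof -
  have "dot (axis i 1) y = (\<Sum>j\<in>UNIV. if j = i then y $ j else 0)"
    unfolding dot_def axis_def by (rule sum.cong) auto
  then show ?thesis by simp
qed

lemma dot_axis_right: "dot x (axis i 1) = x $ i"
proof -
  have "dot x (axis i 1) = (\<Sum>j\<in>UNIV. if j = i then x $ j else 0)"
    unfolding dot_def axis_def by (rule sum.cong) auto
  then show ?thesis by simp
qed

lemma dot_transpose: "dot (transpose A *v x) y = dot x (A *v y)"
  unfolding dot_def transpose_def matrix_vector_mult_def
  by (simp add: sum_distrib_left sum_distrib_right mult_ac) (rule sum.swap)

definition pairing :: "('g \<Rightarrow> 'k::field^'n) \<Rightarrow> ('g \<Rightarrow> 'k^'n) \<Rightarrow> 'k" where
  "pairing \<psi> f = (\<Sum>g\<in>{g. \<psi> g \<noteq> 0}. dot (\<psi> g) (f g))"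

lemma pairing_eq_sum_superset:
  assumes "finite S" "{g. \<psi> g \<noteq> 0} \<subseteq> S"
  shows "pairing \<psi> f = (\<Sum>g\<in>S. dot (\<psi> g) (f g))"
  unfolding pairing_def by (rule sum.mono_neutral_left) (use assms in auto)

lemma pairing_add_left:
  assumes "\<psi>1 \<in> finitely_supported" "\<psi>2 \<in> finitely_supported"
  shows "pairing (\<psi>1 + \<psi>2) f = pairing \<psi>1 f + pairing \<psi>2 f"
proof -
  let ?S = "{g. \<psi>1 g \<noteq> 0} \<union> {g. \<psi>2 g \<noteq> 0}"
  have fin: "finite ?S" using assms by (simp add: finitely_supported_def)
  have "pairing (\<psi>1 + \<psi>2) f = (\<Sum>g\<in>?S. dot ((\<psi>1 + \<psi>2) g) (f g))"
    by (rule pairing_eq_sum_superset[OF fin]) auto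
  moreover have "pairing \<psi>1 f = (\<Sum>g\<in>?S. dot (\<psi>1 g) (f g))"
    by (rule pairing_eq_sum_superset[OF fin]) auto
  moreover have "pairing \<psi>2 f = (\<Sum>g\<in>?S. dot (\<psi>2 g) (f g))"
    by (rule pairing_eq_sum_superset[OF fin]) auto
  ultimately show ?thesis
    by (simp add: dot_add_left sum.distrib)
qed

lemma pairing_scale_left: "pairing (fun_scale c \<psi>) f = c * pairing \<psi> f"
proof (cases "c = 0")
  case False
  then have "{g. fun_scale c \<psi> g \<noteq> 0} = {g. \<psi> g \<noteq> 0}"
    by (simp add: fun_scale_def)
  then show ?thesis
    by (simp add: pairing_def fun_scale_def dot_scale_left sum_distrib_left)
qed (simp add: pairing_def fun_scale_def)

lemma pairing_sum_left:
  "(\<And>x. x \<in> X \<Longrightarrow> F x \<in> finitely_supported)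
    \<Longrightarrow> pairing (sum F X) f = (\<Sum>x\<in>X. pairing (F x) f)"
proof (induction X rule: infinite_finite_induct)
  case (insert x X)
  have "F x \<in> finitely_supported"
    using insert.prems by simp
  moreover have "sum F X \<in> finitely_supported"
    using insert.prems by (simp add: finitely_supported_sum)
  ultimately have "pairing (sum F (insert x X)) f = pairing (F x) f + pairing (sum F X) f"
    unfolding sum.insert[OF insert.hyps] by (rule pairing_add_left)
  also have "pairing (sum F X) f = (\<Sum>x\<in>X. pairing (F x) f)"
    using insert by simp
  finally show ?case
    using insert.hyps by simp
qed (simp_all add: pairing_def)

lemma pairing_delta_left: "pairing (delta g i) f = f g $ i"
proof -
  have "pairing (delta g i) f = (\<Sum>h\<in>{g}. dot (delta g i h) (f h))"
    by (rule pairing_eq_sum_superset) (auto simp: delta_def)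
  then show ?thesis
    by (simp add: delta_def dot_axis_left)
qed

lemma pairing_delta_right:
  assumes "\<psi> \<in> finitely_supported"
  shows "pairing \<psi> (delta g i) = \<psi> g $ i"
proof -
  let ?S = "insert g {h. \<psi> h \<noteq> 0}"
  have fin: "finite ?S" using assms by (simp add: finitely_supported_def)
  have "pairing \<psi> (delta g i) = (\<Sum>h\<in>?S. if h = g then \<psi> g $ i else 0)"
    unfolding pairing_eq_sum_superset[OF fin subset_insertI]
    by (rule sum.cong) (auto simp: delta_def dot_axis_right)
  with fin show ?thesis by simp
qed

lemma finitely_supported_eq_0:
  assumes "\<psi> \<in> finitely_supported" "\<And>g i. pairing \<psi> (delta g i) = 0"
  shows "\<psi> = 0"
  using assms by (simp add: pairing_delta_right fun_eq_iff vec_eq_iff)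

lemma sum_fun_apply: "sum F X x = (\<Sum>a\<in>X. F a x)"
  by (induction X rule: infinite_finite_induct) auto

lemma lca_add: "lca M A (f1 + f2) = lca M A f1 + lca M A f2"
  by (simp add: lca_def fun_eq_iff matrix_vector_right_distrib sum.distrib)

lemma lca_scale: "lca M A (fun_scale c f) = fun_scale c (lca M A f)"
  by (simp add: lca_def fun_scale_def fun_eq_iff vec.scale_sum_right vector_scalar_commute)

lemma linear_lca: "Vector_Spaces.linear fun_scale fun_scale (lca M A)"
  by (simp add: Vector_Spaces.linear_iff vector_space_fun_scale lca_add lca_scale)

lemma lca_transpose_eq_lca:
  "lca_transpose M A = lca (uminus ` M) (\<lambda>m. transpose (A (- m)))"
  by (simp add: lca_transpose_def lca_def fun_eq_iff sum.reindex inj_on_def)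

lemma lca_delta:
  "lca M A (delta g i) = (\<Sum>m\<in>M. \<Sum>j\<in>UNIV. fun_scale (A m $ j $ i) (delta (g + - m) j))"
proof (intro ext iffD2[OF vec_eq_iff] allI)
  fix h l
  have shift: "h + m = g \<longleftrightarrow> h = g + - m" for m
    by (metis add.assoc add.right_inverse add_0_right)
  show "lca M A (delta g i) h $ l
    = (\<Sum>m\<in>M. \<Sum>j\<in>UNIV. fun_scale (A m $ j $ i) (delta (g + - m) j)) h $ l"
    unfolding lca_def sum_component sum_fun_apply
    by (rule sum.cong)
      (auto simp: delta_def fun_scale_def axis_def shift matrix_vector_mult_def if_distrib
        cong: if_cong)
qed

lemma finitely_supported_lca:
  assumes "finite M" "\<psi> \<in> finitely_supported"
  shows "lca M A \<psi> \<in> finitely_supported"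
proof -
  have "{g. lca M A \<psi> g \<noteq> 0} \<subseteq> (\<Union>m\<in>M. (\<lambda>h. h + - m) ` {h. \<psi> h \<noteq> 0})"
  proof
    fix g assume "g \<in> {g. lca M A \<psi> g \<noteq> 0}"
    then obtain m where "m \<in> M" "\<psi> (g + m) \<noteq> 0"
      unfolding lca_def by (force intro: ccontr)
    then show "g \<in> (\<Union>m\<in>M. (\<lambda>h. h + - m) ` {h. \<psi> h \<noteq> 0})"
      by (auto intro!: bexI[of _ m] image_eqI[of _ _ "g + m"] simp: add.assoc)
  qed
  with assms show ?thesis
    by (auto simp: finitely_supported_def intro: finite_subset)
qed

lemma finitely_supported_lca_transpose:
  "finite M \<Longrightarrow> \<psi> \<in> finitely_supported \<Longrightarrow> lca_transpose M A \<psi> \<in> finitely_supported"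
  by (simp add: lca_transpose_eq_lca finitely_supported_lca)

lemma pairing_lca_transpose:
  assumes M: "finite M" and \<psi>: "\<psi> \<in> finitely_supported"
  shows "pairing (lca_transpose M A \<psi>) f = pairing \<psi> (lca M A f)"
proof -
  let ?S = "{g. \<psi> g \<noteq> 0}"
  let ?T = "{h. lca_transpose M A \<psi> h \<noteq> 0} \<union> (\<Union>m\<in>M. (\<lambda>g. g + m) ` ?S)"
  have finS: "finite ?S"
    using \<psi> by (simp add: finitely_supported_def)
  have finT: "finite ?T"
    using M finS finitely_supported_lca_transpose[OF M \<psi>] by (simp add: finitely_supported_def)
  have shift: "(\<Sum>h\<in>?T. dot (transpose (A m) *v \<psi> (h + - m)) (f h))
      = (\<Sum>g\<in>?S. dot (\<psi> g) (A m *v f (g + m)))" if "m \<in> M" for m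
  proof -
    have "(\<Sum>h\<in>?T. dot (transpose (A m) *v \<psi> (h + - m)) (f h))
        = (\<Sum>h\<in>(\<lambda>g. g + m) ` ?S. dot (transpose (A m) *v \<psi> (h + - m)) (f h))"
    proof (rule sum.mono_neutral_right[OF finT])
      show "(\<lambda>g. g + m) ` ?S \<subseteq> ?T"
        using that by blast
      have "\<psi> (h + - m) = 0" if "h \<notin> (\<lambda>g. g + m) ` ?S" for h
        using that by (auto intro: image_eqI[of _ _ "h + - m"] simp: add.assoc)
      then show "\<forall>h\<in>?T - (\<lambda>g. g + m) ` ?S. dot (transpose (A m) *v \<psi> (h + - m)) (f h) = 0"
        by auto
    qed
    also have "\<dots> = (\<Sum>g\<in>?S. dot (transpose (A m) *v \<psi> g) (f (g + m)))"
      by (simp add: sum.reindex inj_on_def add.assoc)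
    finally show ?thesis
      by (simp add: dot_transpose del: transpose_matrix_vector)
  qed
  have "pairing (lca_transpose M A \<psi>) f = (\<Sum>h\<in>?T. dot (lca_transpose M A \<psi> h) (f h))"
    by (rule pairing_eq_sum_superset[OF finT]) auto
  also have "\<dots> = (\<Sum>m\<in>M. \<Sum>h\<in>?T. dot (transpose (A m) *v \<psi> (h + - m)) (f h))"
    unfolding lca_transpose_def dot_sum_left by (rule sum.swap)
  also have "\<dots> = (\<Sum>m\<in>M. \<Sum>g\<in>?S. dot (\<psi> g) (A m *v f (g + m)))"
    by (rule sum.cong[OF refl shift])
  also have "\<dots> = (\<Sum>g\<in>?S. \<Sum>m\<in>M. dot (\<psi> g) (A m *v f (g + m)))"
    by (rule sum.swap)
  also have "\<dots> = pairing \<psi> (lca M A f)"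
    by (simp add: pairing_def lca_def dot_sum_right)
  finally show ?thesis .
qed

lemma pre_injective_lca_transpose_if_surj:
  assumes M: "finite M" and surj: "surj (lca M A)"
  shows "pre_injective (lca_transpose M A)"
proof -
  have "\<psi> = 0" if \<psi>: "\<psi> \<in> finitely_supported" and "lca_transpose M A \<psi> = 0" for \<psi>
  proof (rule finitely_supported_eq_0[OF \<psi>])
    fix g i
    obtain f where "lca M A f = delta g i"
      using surj by (metis surjD)
    then have "pairing \<psi> (delta g i) = pairing (lca_transpose M A \<psi>) f"
      by (simp add: pairing_lca_transpose[OF M \<psi>])
    with \<open>lca_transpose M A \<psi> = 0\<close> show "pairing \<psi> (delta g i) = 0"
      by (simp add: pairing_def)
  qed
  then show ?thesis
    unfolding pre_injective_def lca_transpose_eq_lca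
    by (simp add: vector_space_pair.linear_inj_on_iff_eq_0[OF vector_space_pair_fun_scale
          linear_lca subspace_finitely_supported])
qed

lemma surj_lca_transpose_if_pre_injective:
  assumes M: "finite M" and pre_inj: "pre_injective (lca M A)"
  shows "surj (lca_transpose M A)"
proof -
  obtain L where L_fs: "range L \<subseteq> finitely_supported"
    and L_linear: "Vector_Spaces.linear fun_scale fun_scale L"
    and L_inverse: "\<forall>v\<in>finitely_supported. L (lca M A v) = v"
    using vector_space_pair.linear_exists_left_inverse_on[OF vector_space_pair_fun_scale linear_lca
        subspace_finitely_supported pre_inj[unfolded pre_injective_def]]
    by blast
  note L_sum = vector_space_pair.linear_sum[OF vector_space_pair_fun_scale L_linear]
  note L_scale = vector_space_pair.linear_scale[OF vector_space_pair_fun_scale L_linear]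
  have "lca_transpose M A (\<lambda>g. \<chi> i. pairing (L (delta g i)) h) = h" for h
  proof (intro ext iffD2[OF vec_eq_iff] allI)
    fix g i
    let ?\<phi> = "\<lambda>m j. fun_scale (A m $ j $ i) (L (delta (g + - m) j))"
    have \<phi>_fs: "?\<phi> m j \<in> finitely_supported" for m j
      using L_fs by (blast intro: finitely_supported_scale)
    have "lca_transpose M A (\<lambda>g. \<chi> i. pairing (L (delta g i)) h) g $ i
        = (\<Sum>m\<in>M. \<Sum>j\<in>UNIV. pairing (?\<phi> m j) h)"
      by (simp add: lca_transpose_def sum_component matrix_vector_mult_def transpose_def
          pairing_scale_left)
    also have "\<dots> = pairing (\<Sum>m\<in>M. \<Sum>j\<in>UNIV. ?\<phi> m j) h"
      using \<phi>_fs by (simp add: pairing_sum_left finitely_supported_sum)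
    also have "\<dots> = pairing (L (lca M A (delta g i))) h"
      by (simp add: lca_delta L_sum L_scale)
    also have "\<dots> = h g $ i"
      by (simp add: L_inverse finitely_supported_delta pairing_delta_left)
    finally show "lca_transpose M A (\<lambda>g. \<chi> i. pairing (L (delta g i)) h) g $ i = h g $ i" .
  qed
  then show ?thesis
    by (metis surjI)
qed

theorem corollary1p9:
  fixes M :: "'g::group_add set"
    and A :: "'g \<Rightarrow> 'k::field^'n^'n"
  assumes "finite M"
    and "lca_transpose M A = lca M A"
  shows "surj (lca M A) \<longleftrightarrow> pre_injective (lca M A)"
  using pre_injective_lca_transpose_if_surj[OF assms(1)]
    surj_lca_transpose_if_pre_injective[OF assms(1)] assms(2)
  by metis

end
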